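(* Any cycle of spheres is toric equivalent to a toric minimal one or to one with self-intersection sequence $(-1,p)$. If $S(D)=(-1,p)$, then $Q_D$ is degenerate only if $p=-4$. Suppose $D$ is a toric minimal cycle of spheres with sequence $S(D)=(s_1,\dots,s_k)$. Then: (1) $b^+(Q_D)\ge1$ if and only if $s_i\ge0$ for some $i$; (2) $Q_D$ is negative definite if $s_i\le-2$ for all $i$ and $s_i<-2$ for some $i$; $Q_D$ is negative semi-definite but not negative definite if $s_i=-2$ for each $i$; (3) $Q_D$ is non-degenerate if either $s_1\ge0$ and $s_i\le-2$ for all $i\ge2$, or $s_1=s_2=0$ and $s_i\le-2$ for all $i\ge3$.
   Context: A cycle of spheres in a smooth oriented 4-manifold $X$ is a union $D=C_1\cup\dots\cup C_k$, $k\ge2$, of closed embedded oriented smooth spheres, cyclically labelled, intersecting transversally and positively with no triple points, such that for $k\ge3$ each $C_i$ meets exactly $C_{i-1}$ and $C_{i+1}$ once, and for $k=2$ the two spheres meet in exactly two points. $S(D)=(s_1,\dots,s_k)$ with $s_i=[C_i]\cdot[C_i]$; $Q_D=([C_i]\cdot[C_j])$ is the intersection matrix and $b^+(Q_D)$ its number of positive eigenvalues. A toric blow-up blows up $X$ at the intersection point of adjacent $C_i,C_{i+1}$ and replaces $D$ by the cycle consisting of the proper transforms (self-intersections decreased by $1$) together with the exceptional sphere (self-intersection $-1$) inserted between them; a toric blow-down is the reverse operation (blowing down a component that is a sphere of self-intersection $-1$, provided the result is again a cycle of spheres). Two cycles are toric equivalent if related by a finite sequence of toric blow-ups and blow-downs.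 $D$ is toric minimal if no component is a sphere of self-intersection $-1$. *)

theory Defs
  imports "Jordan_Normal_Form.Char_Poly"
begin

text \<open>A cycle of spheres is encoded by its self-intersection sequence s = S(D)
  (an int list of length k \<ge> 2, entry i being the self-intersection of C_(i+1)).
  The intersection matrix Q_D depends only on this sequence.\<close>

definition cyc_entry :: "int list \<Rightarrow> nat \<Rightarrow> nat \<Rightarrow> int" where
  "cyc_entry s i j =
     (let k = length s in
      if i = j then s ! i
      else if k = 2 then 2
      else if j = Suc i mod k \<or> i = Suc j mod k then 1 else 0)"

definition QD :: "int list \<Rightarrow> real mat" where
  "QD s = mat (length s) (length s) (\<lambda>(i, j). real_of_int (cyc_entry s i j))"

definition b_plus :: "real mat \<Rightarrow> nat" where
  "b_plus A = (\<Sum>x\<in>{x. x > 0 \<and> poly (char_poly A) x = 0}. order x (char_poly A))"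

definition neg_definite :: "real mat \<Rightarrow> bool" where
  "neg_definite A \<longleftrightarrow> (\<forall>v \<in> carrier_vec (dim_row A). v \<noteq> 0\<^sub>v (dim_row A) \<longrightarrow> v \<bullet> (A *\<^sub>v v) < 0)"

definition neg_semidefinite :: "real mat \<Rightarrow> bool" where
  "neg_semidefinite A \<longleftrightarrow> (\<forall>v \<in> carrier_vec (dim_row A). v \<bullet> (A *\<^sub>v v) \<le> 0)"

definition degenerate :: "real mat \<Rightarrow> bool" where
  "degenerate A \<longleftrightarrow> det A = 0"

text \<open>Toric blow-up at the intersection point of the last and the first sphere:
  (a, m..., b) becomes (a-1, m..., b-1, -1).  Blow-ups at other intersection points
  are obtained by combining with cyclic relabelling.\<close>
definition toric_blowup :: "int list \<Rightarrow> int list" where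
  "toric_blowup s = (hd s - 1) # butlast (tl s) @ [last s - 1, -1]"

text \<open>One elementary move between cycles: relabelling (rotation / reversal of the
  cyclic labelling), a toric blow-up, or a toric blow-down (inverse of a blow-up,
  which requires the result to be a cycle, i.e. of length at least 2).\<close>
definition toric_step :: "int list \<Rightarrow> int list \<Rightarrow> bool" where
  "toric_step s t \<longleftrightarrow> length s \<ge> 2 \<and> length t \<ge> 2 \<and>
     (t = rotate1 s \<or> t = rev s \<or> t = toric_blowup s \<or> s = toric_blowup t)"

definition toric_equiv :: "int list \<Rightarrow> int list \<Rightarrow> bool" where
  "toric_equiv = toric_step\<^sup>*\<^sup>*"

definition toric_minimal :: "int list \<Rightarrow> bool" where
  "toric_minimal s \<longleftrightarrow> (-1) \<notin> set s"

end

(*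
  Toric reduction: a (-1)-sphere
  in a cycle of length at least three is rotated to the end of the sequence and blown down, which
  shortens the cycle; a 2-cycle containing -1 is a relabelling of (-1, p), and Q_D of (-1, p) has
  determinant -p - 4.

  Everything about Q_D rests on the identity
    v . Q_D v = sum_i (s_i + 2) v_i^2 - sum_i (v_i - v_(i+1))^2.
  If all s_i <= -2, both sums make the form non-positive, and it vanishes only on vectors that are
  constant and satisfy (s_i + 2) v_i = 0; this gives (2), and (as toric minimality excludes -1)
  the "only if" part of (1).  If s_i >= 0, the form is positive on e_i + t e_(i+1) for small t,
  and a symmetric matrix whose form takes a positive value has a positive eigenvalue: maximise the
  form on the unit ball.

  For (3), let y be a kernel vector v with its coordinates at the non-negative vertices set to 0.
  By symmetry y . Q_D y = -(Q_D y) . (v - y), which the kernel equations turn into s_0 v_0^2,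
  resp. 2 v_2 v_(k-1).  On the remaining arc of (<= -2)-vertices the form plus the squares of the
  two end values of y is non-positive and vanishes only if y is constant on the arc.  In both
  cases this forces y = 0 and then v = 0.
*)
theory Submission
  imports Defs "HOL-Analysis.Function_Topology"
begin

lemma real_vec_self_nonneg: "0 \<le> (v :: real vec) \<bullet> v"
  using conjugate_square_ge_0_vec[of v] by simp

lemma real_vec_self_eq_0_iff: "(v :: real vec) \<in> carrier_vec n \<Longrightarrow> v \<bullet> v = 0 \<longleftrightarrow> v = 0\<^sub>v n"
  using conjugate_square_eq_0_vec[of v n] by simp

lemma linear_plus_quadratic_nonpos_imp_zero:
  fixes a b :: real
  assumes nonpos: "\<And>t. a * t + b * t\<^sup>2 \<le> 0"
  shows "a = 0"
proof (rule ccontr)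
  assume "a \<noteq> 0"
  define t where "t = a / (\<bar>b\<bar> + 1)"
  have "t \<noteq> 0" using \<open>a \<noteq> 0\<close> by (simp add: t_def add_pos_nonneg)
  have "a = (\<bar>b\<bar> + 1) * t" by (simp add: t_def add_pos_nonneg)
  then have "a * t + b * t\<^sup>2 = (\<bar>b\<bar> + 1 + b) * t\<^sup>2"
    by (simp add: power2_eq_square algebra_simps)
  also have "\<dots> \<ge> t\<^sup>2" using mult_right_mono[of 1 "\<bar>b\<bar> + 1 + b" "t\<^sup>2"] by simp
  finally have "t\<^sup>2 \<le> a * t + b * t\<^sup>2" .
  moreover have "0 < t\<^sup>2" using \<open>t \<noteq> 0\<close> by simp
  ultimately show False using nonpos[of t] by linarith
qed

lemma symmetric_form_swap:
  fixes A :: "'a :: comm_semiring_0 mat"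
  assumes A: "A \<in> carrier_mat n n" "transpose_mat A = A" and u: "u \<in> carrier_vec n" and w: "w \<in> carrier_vec n"
  shows "u \<bullet> (A *\<^sub>v w) = w \<bullet> (A *\<^sub>v u)"
  using transpose_vec_mult_scalar[OF A(1) u w] comm_scalar_prod[of u n "A *\<^sub>v w"] A u w by simp

lemma symmetric_form_add_smult:
  fixes A :: "'a :: field mat"
  assumes A: "A \<in> carrier_mat n n" "transpose_mat A = A" and u: "u \<in> carrier_vec n" and w: "w \<in> carrier_vec n"
  shows "(u + t \<cdot>\<^sub>v w) \<bullet> (A *\<^sub>v (u + t \<cdot>\<^sub>v w))
       = u \<bullet> (A *\<^sub>v u) + 2 * t * (w \<bullet> (A *\<^sub>v u)) + t\<^sup>2 * (w \<bullet> (A *\<^sub>v w))"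
  using A u w symmetric_form_swap[OF A u w]
  by (simp add: mult_add_distrib_mat_vec[OF A(1)] mult_mat_vec[OF A(1)] add_scalar_prod_distrib[of _ n]
      scalar_prod_add_distrib[of _ n] power2_eq_square algebra_simps)

lemma symmetric_form_of_kernel_diff:
  fixes A :: "'a :: comm_ring_1 mat"
  assumes A: "A \<in> carrier_mat n n" "transpose_mat A = A" and v: "v \<in> carrier_vec n" and w: "w \<in> carrier_vec n"
    and kernel: "A *\<^sub>v v = 0\<^sub>v n"
  shows "(v - w) \<bullet> (A *\<^sub>v (v - w)) = - ((A *\<^sub>v (v - w)) \<bullet> w)"
proof -
  have vw: "v - w \<in> carrier_vec n" using v w by simp
  have "(v - w) \<bullet> (A *\<^sub>v (v - w)) = (A *\<^sub>v (v - w)) \<bullet> v - (A *\<^sub>v (v - w)) \<bullet> w"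
    using A vw v w by (simp add: comm_scalar_prod[of "v - w" n] scalar_prod_minus_distrib[of _ n])
  also have "(A *\<^sub>v (v - w)) \<bullet> v = (v - w) \<bullet> (A *\<^sub>v v)"
    using symmetric_form_swap[OF A v vw] A v vw by (simp add: comm_scalar_prod[of v n])
  finally show ?thesis using kernel vw by simp
qed

lemma unit_vec_form:
  fixes A :: "'a :: semiring_1 mat"
  assumes "A \<in> carrier_mat n n" "i < n" "j < n"
  shows "unit_vec n i \<bullet> (A *\<^sub>v unit_vec n j) = A $$ (i, j)"
proof -
  have "unit_vec n i \<bullet> (A *\<^sub>v unit_vec n j) = row A i \<bullet> unit_vec n j"
    using assms by (subst scalar_prod_left_unit[of _ n]) auto
  then show ?thesis using assms by simp
qed

lemma symmetric_form_pos_of_entries: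
  fixes A :: "real mat"
  assumes A: "A \<in> carrier_mat n n" "transpose_mat A = A" and i: "i < n" and j: "j < n"
    and diag: "0 \<le> A $$ (i, i)" and off_diag: "0 < A $$ (j, i)"
  shows "\<exists>v \<in> carrier_vec n. 0 < v \<bullet> (A *\<^sub>v v)"
proof -
  define t where "t = A $$ (j, i) / (\<bar>A $$ (j, j)\<bar> + 1)"
  have t: "0 < t" "t * \<bar>A $$ (j, j)\<bar> \<le> A $$ (j, i)"
    using off_diag by (auto simp: t_def field_simps)
  have "- (t\<^sup>2 * \<bar>A $$ (j, j)\<bar>) \<le> t\<^sup>2 * A $$ (j, j)"
    using mult_left_mono[of "- \<bar>A $$ (j, j)\<bar>" "A $$ (j, j)" "t\<^sup>2"] by simp
  moreover have "t\<^sup>2 * \<bar>A $$ (j, j)\<bar> \<le> t * A $$ (j, i)"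
    using mult_left_mono[OF t(2), of t] t(1) by (simp add: power2_eq_square mult.assoc)
  ultimately have "0 < A $$ (i, i) + 2 * t * A $$ (j, i) + t\<^sup>2 * A $$ (j, j)"
    using diag mult_pos_pos[OF t(1) off_diag] by linarith
  also have "\<dots> = (unit_vec n i + t \<cdot>\<^sub>v unit_vec n j) \<bullet> (A *\<^sub>v (unit_vec n i + t \<cdot>\<^sub>v unit_vec n j))"
    using symmetric_form_add_smult[OF A, of "unit_vec n i" "unit_vec n j" t] A i j
    by (simp add: unit_vec_form)
  finally show ?thesis by (intro bexI[of _ "unit_vec n i + t \<cdot>\<^sub>v unit_vec n j"]) auto
qed

(* Vectors of length n are handled as functions nat => real vanishing from n on, so that the
   product topology makes their unit ball compact. *)
lemma compact_unit_ball_finite_support: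
  "compact {f :: nat \<Rightarrow> real. (\<forall>i\<ge>n. f i = 0) \<and> (\<Sum>i<n. (f i)\<^sup>2) \<le> 1}"
proof -
  define S where "S i = (if i < n then {-1..1} else {0 :: real})" for i
  have "compactin (powertop_real UNIV) (PiE UNIV S)"
    unfolding compactin_PiE by (auto simp: S_def)
  then have "compact (Pi UNIV S)"
    by (simp add: euclidean_product_topology PiE_UNIV_domain)
  moreover have "closed {f :: nat \<Rightarrow> real. (\<Sum>i<n. (f i)\<^sup>2) \<le> 1}"
    by (intro closed_Collect_le continuous_intros
        continuous_on_compose2[OF continuous_on_product_coordinates]) auto
  moreover have "{f. (\<forall>i\<ge>n. f i = 0) \<and> (\<Sum>i<n. (f i)\<^sup>2) \<le> 1}
      = Pi UNIV S \<inter> {f. (\<Sum>i<n. (f i)\<^sup>2) \<le> 1}"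
  proof -
    have "\<bar>f i\<bar> \<le> 1" if "(\<Sum>i<n. (f i)\<^sup>2) \<le> 1" "i < n" for f :: "nat \<Rightarrow> real" and i
    proof -
      have "(f i)\<^sup>2 \<le> (\<Sum>i<n. (f i)\<^sup>2)" by (rule member_le_sum) (use that in auto)
      then show ?thesis using that abs_square_le_1 by fastforce
    qed
    then show ?thesis by (auto simp: S_def Pi_iff abs_le_iff not_less split: if_splits)
  qed
  ultimately show ?thesis by (simp add: compact_Int_closed)
qed

lemma vec_form_eq_sum:
  assumes "A \<in> carrier_mat n n"
  shows "vec n f \<bullet> (A *\<^sub>v vec n f) = (\<Sum>i<n. f i * (\<Sum>j<n. A $$ (i, j) * f j))"
  using assms by (simp add: scalar_prod_def mult_mat_vec_def atLeast0LessThan)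

lemma vec_self_eq_sum: "vec n f \<bullet> vec n f = (\<Sum>i<n. (f i :: real)\<^sup>2)"
  by (simp add: scalar_prod_def power2_eq_square atLeast0LessThan)

lemma form_attains_max_on_unit_ball:
  fixes A :: "real mat"
  assumes A: "A \<in> carrier_mat n n"
  obtains u where "u \<in> carrier_vec n" "u \<bullet> u \<le> 1"
    "\<And>v. v \<in> carrier_vec n \<Longrightarrow> v \<bullet> v \<le> 1 \<Longrightarrow> v \<bullet> (A *\<^sub>v v) \<le> u \<bullet> (A *\<^sub>v u)"
proof -
  define K where "K = {f :: nat \<Rightarrow> real. (\<forall>i\<ge>n. f i = 0) \<and> (\<Sum>i<n. (f i)\<^sup>2) \<le> 1}"
  define F where "F f = vec n f \<bullet> (A *\<^sub>v vec n f)" for f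
  have "continuous_on K F"
    unfolding F_def vec_form_eq_sum[OF A]
    by (intro continuous_intros continuous_on_compose2[OF continuous_on_product_coordinates]) auto
  moreover have "K \<noteq> {}" by (auto simp: K_def intro!: exI[of _ "\<lambda>_. 0"])
  ultimately obtain f0 where "f0 \<in> K" and max: "\<And>f. f \<in> K \<Longrightarrow> F f \<le> F f0"
    using continuous_attains_sup[of K F] compact_unit_ball_finite_support[of n, folded K_def] by blast
  show ?thesis
  proof
    show "vec n f0 \<in> carrier_vec n" by simp
    show "vec n f0 \<bullet> vec n f0 \<le> 1" using \<open>f0 \<in> K\<close> by (simp add: vec_self_eq_sum K_def)
    fix v :: "real vec" assume v: "v \<in> carrier_vec n" "v \<bullet> v \<le> 1"
    define f where "f i = (if i < n then v $ i else 0)" for i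
    have "vec n f = v" using v(1) by (auto simp: f_def)
    then have "f \<in> K" using v(2) vec_self_eq_sum[of n f] by (simp add: K_def f_def)
    then show "v \<bullet> (A *\<^sub>v v) \<le> vec n f0 \<bullet> (A *\<^sub>v vec n f0)"
      using max[of f] \<open>vec n f = v\<close> by (simp add: F_def)
  qed
qed

lemma form_le_of_le_on_unit_ball:
  fixes A :: "real mat"
  assumes A: "A \<in> carrier_mat n n"
    and ball: "\<And>v. v \<in> carrier_vec n \<Longrightarrow> v \<bullet> v \<le> 1 \<Longrightarrow> v \<bullet> (A *\<^sub>v v) \<le> m"
    and v: "v \<in> carrier_vec n"
  shows "v \<bullet> (A *\<^sub>v v) \<le> m * (v \<bullet> v)"
proof (cases "v = 0\<^sub>v n")
  case True
  then show ?thesis using A by simp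
next
  case False
  have "0 < v \<bullet> v" using real_vec_self_nonneg[of v] real_vec_self_eq_0_iff[OF v] False by linarith
  define c where "c = 1 / sqrt (v \<bullet> v)"
  have c2: "c\<^sup>2 * (v \<bullet> v) = 1" using \<open>0 < v \<bullet> v\<close> by (simp add: c_def power_divide)
  have "(c \<cdot>\<^sub>v v) \<bullet> (c \<cdot>\<^sub>v v) = c\<^sup>2 * (v \<bullet> v)" using v by (simp add: power2_eq_square)
  then have "(c \<cdot>\<^sub>v v) \<bullet> (A *\<^sub>v (c \<cdot>\<^sub>v v)) \<le> m" using ball[of "c \<cdot>\<^sub>v v"] v c2 by simp
  moreover have "(c \<cdot>\<^sub>v v) \<bullet> (A *\<^sub>v (c \<cdot>\<^sub>v v)) = c\<^sup>2 * (v \<bullet> (A *\<^sub>v v))"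
    using A v by (simp add: mult_mat_vec power2_eq_square)
  ultimately have "c\<^sup>2 * (v \<bullet> (A *\<^sub>v v)) \<le> c\<^sup>2 * (v \<bullet> v) * m" using c2 by simp
  moreover have "0 < c\<^sup>2" using \<open>0 < v \<bullet> v\<close> by (simp add: c_def)
  ultimately show ?thesis by (simp add: mult.assoc mult.commute[of m])
qed

lemma symmetric_form_max_imp_eigenvector:
  fixes A :: "real mat"
  assumes A: "A \<in> carrier_mat n n" "transpose_mat A = A"
    and bound: "\<And>v. v \<in> carrier_vec n \<Longrightarrow> v \<bullet> (A *\<^sub>v v) \<le> l * (v \<bullet> v)"
    and u: "u \<in> carrier_vec n" and attained: "u \<bullet> (A *\<^sub>v u) = l * (u \<bullet> u)"
  shows "A *\<^sub>v u = l \<cdot>\<^sub>v u"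
proof -
  define g where "g = A *\<^sub>v u - l \<cdot>\<^sub>v u"
  have g: "g \<in> carrier_vec n" using A u by (simp add: g_def)
  have "g \<bullet> g = g \<bullet> (A *\<^sub>v u - l \<cdot>\<^sub>v u)" by (simp only: g_def)
  also have "\<dots> = g \<bullet> (A *\<^sub>v u) - l * (g \<bullet> u)"
    using g A u by (simp add: scalar_prod_minus_distrib[of g n])
  finally have g_self: "g \<bullet> g = g \<bullet> (A *\<^sub>v u) - l * (g \<bullet> u)" .
  have I: "1\<^sub>m n \<in> carrier_mat n n" "transpose_mat (1\<^sub>m n) = 1\<^sub>m n" by simp_all
  (* the bound along the line u + t g, for every t, forces the residual g to vanish *)
  have "2 * (g \<bullet> g) * t + (g \<bullet> (A *\<^sub>v g) - l * (g \<bullet> g)) * t\<^sup>2 \<le> 0" for t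
  proof -
    have "(u + t \<cdot>\<^sub>v g) \<bullet> (A *\<^sub>v (u + t \<cdot>\<^sub>v g)) \<le> l * ((u + t \<cdot>\<^sub>v g) \<bullet> (u + t \<cdot>\<^sub>v g))"
      using bound u g by simp
    moreover have "(u + t \<cdot>\<^sub>v g) \<bullet> (u + t \<cdot>\<^sub>v g) = u \<bullet> u + 2 * t * (g \<bullet> u) + t\<^sup>2 * (g \<bullet> g)"
      using symmetric_form_add_smult[OF I u g, of t] u g by simp
    ultimately have "2 * t * (g \<bullet> (A *\<^sub>v u)) + t\<^sup>2 * (g \<bullet> (A *\<^sub>v g))
        \<le> l * (2 * t * (g \<bullet> u) + t\<^sup>2 * (g \<bullet> g))"
      using symmetric_form_add_smult[OF A u g, of t] attained by (simp add: algebra_simps)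
    then show ?thesis by (simp add: g_self algebra_simps)
  qed
  then have "2 * (g \<bullet> g) = 0" by (rule linear_plus_quadratic_nonpos_imp_zero)
  then have "g = 0\<^sub>v n" using real_vec_self_eq_0_iff[OF g] by simp
  then have "g $ i = 0" if "i < n" for i using that by simp
  then show ?thesis using A u by (intro eq_vecI) (auto simp: g_def)
qed

lemma symmetric_pos_form_imp_pos_eigenvalue:
  fixes A :: "real mat"
  assumes A: "A \<in> carrier_mat n n" "transpose_mat A = A"
    and x: "x \<in> carrier_vec n" "0 < x \<bullet> (A *\<^sub>v x)"
  shows "\<exists>l > 0. eigenvalue A l"
proof -
  obtain u where u: "u \<in> carrier_vec n" "u \<bullet> u \<le> 1"
    and max: "\<And>v. v \<in> carrier_vec n \<Longrightarrow> v \<bullet> v \<le> 1 \<Longrightarrow> v \<bullet> (A *\<^sub>v v) \<le> u \<bullet> (A *\<^sub>v u)"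
    using form_attains_max_on_unit_ball[OF A(1)] by blast
  define l where "l = u \<bullet> (A *\<^sub>v u)"
  have bound: "v \<bullet> (A *\<^sub>v v) \<le> l * (v \<bullet> v)" if "v \<in> carrier_vec n" for v
    using form_le_of_le_on_unit_ball[OF A(1) max that] by (simp add: l_def)
  have "0 < l * (x \<bullet> x)" using bound[OF x(1)] x(2) by simp
  then have "0 < l" using real_vec_self_nonneg[of x] by (simp add: zero_less_mult_iff)
  have "u \<bullet> u = 1"
    using bound[OF u(1)] u(2) \<open>0 < l\<close> unfolding l_def[symmetric] by simp
  then have "A *\<^sub>v u = l \<cdot>\<^sub>v u"
    by (intro symmetric_form_max_imp_eigenvector[OF A bound u(1)]) (simp_all add: l_def)
  moreover have "u \<noteq> 0\<^sub>v n" using \<open>u \<bullet> u = 1\<close> u(1) by auto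
  ultimately have "eigenvalue A l"
    using A u unfolding eigenvalue_def eigenvector_def by auto
  then show ?thesis using \<open>0 < l\<close> by blast
qed

lemma eigenvalue_le_0_if_neg_semidefinite:
  fixes A :: "real mat"
  assumes A: "A \<in> carrier_mat n n" and "neg_semidefinite A" and "eigenvalue A l"
  shows "l \<le> 0"
proof -
  obtain v where v: "v \<in> carrier_vec n" "v \<noteq> 0\<^sub>v n" "A *\<^sub>v v = l \<cdot>\<^sub>v v"
    using \<open>eigenvalue A l\<close> A unfolding eigenvalue_def eigenvector_def by auto
  have "l * (v \<bullet> v) \<le> 0"
    using \<open>neg_semidefinite A\<close> A v unfolding neg_semidefinite_def by auto
  moreover have "0 < v \<bullet> v"
    using real_vec_self_nonneg[of v] real_vec_self_eq_0_iff[OF v(1)] v(2) by linarith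
  ultimately show ?thesis by (simp add: mult_le_0_iff)
qed

lemma b_plus_ge_1_iff:
  fixes A :: "real mat"
  assumes A: "A \<in> carrier_mat n n"
  shows "1 \<le> b_plus A \<longleftrightarrow> (\<exists>l > 0. eigenvalue A l)"
proof -
  let ?p = "char_poly A"
  let ?R = "{x. x > 0 \<and> poly ?p x = 0}"
  have "?p \<noteq> 0" using degree_monic_char_poly[OF A] by auto
  then have "finite ?R" by (rule finite_subset[OF _ poly_roots_finite, rotated]) auto
  have "1 \<le> b_plus A \<longleftrightarrow> ?R \<noteq> {}"
  proof
    assume "1 \<le> b_plus A"
    then show "?R \<noteq> {}" unfolding b_plus_def by (metis not_one_le_zero sum.empty)
  next
    assume "?R \<noteq> {}"
    then obtain l where l: "l \<in> ?R" by blast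
    have "order l ?p \<noteq> 0" using l \<open>?p \<noteq> 0\<close> order_root[of ?p l] by auto
    moreover have "order l ?p \<le> b_plus A"
      unfolding b_plus_def by (rule member_le_sum[OF l _ \<open>finite ?R\<close>]) auto
    ultimately show "1 \<le> b_plus A" by simp
  qed
  then show ?thesis using eigenvalue_root_char_poly[OF A] by auto
qed

lemma sum_lessThan_rotate:
  assumes "0 < k"
  shows "(\<Sum>i<k. f (Suc i mod k)) = (\<Sum>i<k. f i)"
proof -
  obtain m where k: "k = Suc m" using assms by (cases k) auto
  have "(\<Sum>i<k. f (Suc i mod k)) = (\<Sum>i<m. f (Suc i mod k)) + f (Suc m mod k)"
    by (simp add: k)
  also have "(\<Sum>i<m. f (Suc i mod k)) = (\<Sum>i<m. f (Suc i))"
    by (intro sum.cong refl) (simp add: k)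
  also have "(\<Sum>i<m. f (Suc i)) + f (Suc m mod k) = (\<Sum>i<k. f i)"
    unfolding k sum.lessThan_Suc_shift by (simp add: add.commute)
  finally show ?thesis .
qed

lemma eq_Suc_mod_iff:
  fixes i j k :: nat
  assumes "i < k" "j < k"
  shows "i = Suc j mod k \<longleftrightarrow> j = (i + k - 1) mod k"
proof -
  have "Suc j mod k = (if Suc j = k then 0 else Suc j)" using assms(2) by (simp add: mod_Suc)
  moreover have "(i + k - 1) mod k = (if i = 0 then k - 1 else i - 1)"
    using assms(1) by (cases i) simp_all
  ultimately show ?thesis using assms by (simp split: if_splits) linarith
qed

lemma eq_chain_imp_eq:
  assumes "\<And>i. m \<le> i \<Longrightarrow> i < n \<Longrightarrow> f (Suc i) = f i" and "m \<le> j" "j \<le> n"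
  shows "f j = f m"
  using assms(2,3) by (induction j rule: dec_induct) (auto simp: assms(1))

lemma cyclic_differences_eq_0_imp_const:
  fixes f :: "nat \<Rightarrow> real"
  assumes "(\<Sum>i<k. (f i - f (Suc i mod k))\<^sup>2) = 0" and "i < k"
  shows "f i = f 0"
proof (rule eq_chain_imp_eq[of 0 "k - 1" f i])
  fix j assume "j < k - 1"
  then have "Suc j mod k = Suc j" by (intro mod_less) linarith
  moreover have "(f j - f (Suc j mod k))\<^sup>2 = 0"
    using sum_nonneg_0[of "{..<k}" "\<lambda>i. (f i - f (Suc i mod k))\<^sup>2" j] assms(1) \<open>j < k - 1\<close>
    by simp
  ultimately show "f (Suc j) = f j" by simp
qed (use assms(2) in auto)

lemma cyclic_differences_arc:
  fixes f :: "nat \<Rightarrow> real"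
  assumes m: "0 < m" "m < k" and zero: "\<And>i. i < m \<Longrightarrow> f i = 0"
  shows "(\<Sum>i<k. (f i - f (Suc i mod k))\<^sup>2)
       = (f m)\<^sup>2 + (f (k - 1))\<^sup>2 + (\<Sum>i\<in>{m..<k - 1}. (f i - f (Suc i))\<^sup>2)"
proof -
  define d where "d i = (f i - f (Suc i mod k))\<^sup>2" for i
  have k: "k = Suc (k - 1)" and m': "m = Suc (m - 1)" using m by auto
  have "(\<Sum>i<k. d i) = (\<Sum>i<m - 1. d i) + d (m - 1) + (\<Sum>i\<in>{m..<k - 1}. d i) + d (k - 1)"
  proof -
    have "(\<Sum>i<k - 1. d i) = (\<Sum>i<m. d i) + (\<Sum>i\<in>{m..<k - 1}. d i)"
      using m by (simp add: lessThan_atLeast0 sum.atLeastLessThan_concat)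
    moreover have "(\<Sum>i<m. d i) = (\<Sum>i<m - 1. d i) + d (m - 1)"
      by (subst m') (simp only: sum.lessThan_Suc diff_Suc_1)
    ultimately show ?thesis by (subst k) (simp only: sum.lessThan_Suc diff_Suc_1)
  qed
  moreover have "(\<Sum>i<m - 1. d i) = 0"
  proof (intro sum.neutral ballI)
    fix i assume "i \<in> {..<m - 1}"
    then have "Suc i mod k = Suc i" "i < m" "Suc i < m" using m by auto
    then show "d i = 0" using zero by (simp add: d_def)
  qed
  moreover have "d (m - 1) = (f m)\<^sup>2" using m zero[of "m - 1"] by (simp add: d_def)
  moreover have "d (k - 1) = (f (k - 1))\<^sup>2" using m zero[of 0] by (subst (2) k) (simp add: d_def)
  moreover have "(\<Sum>i\<in>{m..<k - 1}. d i) = (\<Sum>i\<in>{m..<k - 1}. (f i - f (Suc i))\<^sup>2)"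
    by (intro sum.cong) (auto simp: d_def)
  ultimately have "(\<Sum>i<k. d i) = (f m)\<^sup>2 + (f (k - 1))\<^sup>2 + (\<Sum>i\<in>{m..<k - 1}. (f i - f (Suc i))\<^sup>2)"
    by linarith
  then show ?thesis by (simp only: d_def)
qed

lemma QD_carrier: "QD s \<in> carrier_mat (length s) (length s)"
  by (simp add: QD_def)

lemma QD_symmetric: "transpose_mat (QD s) = QD s"
  by (rule eq_matI) (auto simp: QD_def cyc_entry_def Let_def)

(* For a 2-cycle both neighbour terms fire, which gives the off-diagonal entry 2. *)
lemma QD_entry:
  assumes "2 \<le> length s" "i < length s" "j < length s"
  shows "QD s $$ (i, j) = (if i = j then of_int (s ! i) else 0)
     + (if j = Suc i mod length s then 1 else 0) + (if i = Suc j mod length s then 1 else 0)"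
  using assms by (auto simp: QD_def cyc_entry_def Let_def mod_Suc)

lemma QD_diag: "i < length s \<Longrightarrow> QD s $$ (i, i) = of_int (s ! i)"
  by (simp add: QD_def cyc_entry_def)

lemma Suc_mod_neq:
  fixes i k :: nat
  assumes "2 \<le> k" "i < k"
  shows "Suc i mod k \<noteq> i"
proof (cases "Suc i < k")
  case True
  then show ?thesis by simp
next
  case False
  then have "Suc i = k" using assms(2) by simp
  then show ?thesis using assms(1) by simp
qed

lemma QD_succ_entry_pos:
  assumes "2 \<le> length s" "i < length s"
  shows "0 < QD s $$ (Suc i mod length s, i)"
proof -
  have "Suc i mod length s < length s" using assms(1) by (intro mod_less_divisor) linarith
  then show ?thesis using assms Suc_mod_neq[OF assms] by (simp add: QD_def cyc_entry_def Let_def)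
qed

lemma QD_mult_vec_nth:
  assumes k: "2 \<le> length s" and i: "i < length s" and v: "v \<in> carrier_vec (length s)"
  shows "(QD s *\<^sub>v v) $ i = of_int (s ! i) * v $ i + v $ (Suc i mod length s)
     + v $ ((i + length s - 1) mod length s)"
proof -
  let ?k = "length s"
  have "(QD s *\<^sub>v v) $ i = (\<Sum>j<?k. QD s $$ (i, j) * v $ j)"
    using i v QD_carrier[of s] by (simp add: scalar_prod_def atLeast0LessThan)
  also have "\<dots> = (\<Sum>j<?k. (if j = i then of_int (s ! i) * v $ j else 0)
      + (if j = Suc i mod ?k then v $ j else 0) + (if j = (i + ?k - 1) mod ?k then v $ j else 0))"
    by (intro sum.cong refl) (use k i in \<open>auto simp: QD_entry eq_Suc_mod_iff distrib_right\<close>)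
  also have "\<dots> = of_int (s ! i) * v $ i + v $ (Suc i mod ?k) + v $ ((i + ?k - 1) mod ?k)"
  proof -
    have "0 < ?k" using k by linarith
    then have "Suc i mod ?k < ?k" "(i + ?k - 1) mod ?k < ?k" by simp_all
    then show ?thesis using i by (simp add: sum.distrib)
  qed
  finally show ?thesis .
qed

lemma QD_form:
  assumes k: "2 \<le> length s" and v: "v \<in> carrier_vec (length s)"
  shows "v \<bullet> (QD s *\<^sub>v v) = (\<Sum>i<length s. (of_int (s ! i) + 2) * (v $ i)\<^sup>2)
     - (\<Sum>i<length s. (v $ i - v $ (Suc i mod length s))\<^sup>2)"
proof -
  let ?k = "length s"
  let ?succ = "\<lambda>i. Suc i mod ?k" and ?pred = "\<lambda>i. (i + ?k - 1) mod ?k"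
  have k0: "0 < ?k" using k by linarith
  have pred_succ: "?pred (?succ i) = i" if "i < ?k" for i
    using eq_Suc_mod_iff[of "?succ i" ?k i] that k0 by simp
  have "v \<bullet> (QD s *\<^sub>v v) = (\<Sum>i<?k. v $ i * (QD s *\<^sub>v v) $ i)"
    using v QD_carrier[of s] by (simp add: scalar_prod_def atLeast0LessThan)
  also have "\<dots> = (\<Sum>i<?k. of_int (s ! i) * (v $ i)\<^sup>2) + (\<Sum>i<?k. v $ i * v $ ?succ i)
      + (\<Sum>i<?k. v $ i * v $ ?pred i)"
    using k v by (simp add: QD_mult_vec_nth sum.distrib[symmetric] algebra_simps power2_eq_square)
  finally have form: "v \<bullet> (QD s *\<^sub>v v) = (\<Sum>i<?k. of_int (s ! i) * (v $ i)\<^sup>2)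
      + (\<Sum>i<?k. v $ i * v $ ?succ i) + (\<Sum>i<?k. v $ i * v $ ?pred i)" .
  have "(\<Sum>i<?k. v $ i * v $ ?pred i) = (\<Sum>i<?k. v $ ?succ i * v $ ?pred (?succ i))"
    using sum_lessThan_rotate[OF k0, of "\<lambda>i. v $ i * v $ ?pred i"] by simp
  also have "\<dots> = (\<Sum>i<?k. v $ i * v $ ?succ i)"
    by (intro sum.cong refl) (metis lessThan_iff mult.commute pred_succ)
  finally have pred_sum: "(\<Sum>i<?k. v $ i * v $ ?pred i) = (\<Sum>i<?k. v $ i * v $ ?succ i)" .
  have diff_sum: "(\<Sum>i<?k. (v $ i - v $ ?succ i)\<^sup>2)
      = 2 * (\<Sum>i<?k. (v $ i)\<^sup>2) - 2 * (\<Sum>i<?k. v $ i * v $ ?succ i)"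
    using sum_lessThan_rotate[OF k0, of "\<lambda>i. (v $ i)\<^sup>2"]
    by (simp add: power2_diff sum.distrib sum_subtractf sum_distrib_left mult.assoc)
  have "(\<Sum>i<?k. (of_int (s ! i) + 2) * (v $ i)\<^sup>2)
      = (\<Sum>i<?k. of_int (s ! i) * (v $ i)\<^sup>2) + 2 * (\<Sum>i<?k. (v $ i)\<^sup>2)"
    by (simp add: distrib_right sum.distrib sum_distrib_left)
  then show ?thesis using form pred_sum diff_sum by linarith
qed

lemma of_int_plus_2_times_square_nonpos: "(z :: int) \<le> -2 \<Longrightarrow> (of_int z + 2) * (x :: real)\<^sup>2 \<le> 0"
  by (rule mult_nonpos_nonneg) simp_all

lemma QD_form_nonpos:
  assumes k: "2 \<le> length s" and neg: "\<forall>i<length s. s ! i \<le> -2"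
    and v: "v \<in> carrier_vec (length s)"
  shows "v \<bullet> (QD s *\<^sub>v v) \<le> 0"
proof -
  have "(\<Sum>i<length s. (of_int (s ! i) + 2) * (v $ i)\<^sup>2) \<le> 0"
    using neg by (intro sum_nonpos) (simp add: of_int_plus_2_times_square_nonpos)
  moreover have "0 \<le> (\<Sum>i<length s. (v $ i - v $ (Suc i mod length s))\<^sup>2)"
    by (intro sum_nonneg) simp
  ultimately show ?thesis using QD_form[OF k v] by linarith
qed

lemma QD_neg_semidefinite:
  assumes "2 \<le> length s" "\<forall>i<length s. s ! i \<le> -2"
  shows "neg_semidefinite (QD s)"
  using QD_form_nonpos[OF assms] QD_carrier[of s] unfolding neg_semidefinite_def by simp

lemma QD_neg_definite:
  assumes k: "2 \<le> length s" and neg: "\<forall>i<length s. s ! i \<le> -2"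
    and strict: "\<exists>j<length s. s ! j < -2"
  shows "neg_definite (QD s)"
  unfolding neg_definite_def
proof (intro ballI impI)
  let ?k = "length s"
  fix v :: "real vec" assume "v \<in> carrier_vec (dim_row (QD s))" "v \<noteq> 0\<^sub>v (dim_row (QD s))"
  then have v: "v \<in> carrier_vec ?k" "v \<noteq> 0\<^sub>v ?k" using QD_carrier[of s] by auto
  let ?t = "\<lambda>i. (of_int (s ! i) + 2) * (v $ i)\<^sup>2"
  obtain j where j: "j < ?k" "s ! j < -2" using strict by blast
  show "v \<bullet> (QD s *\<^sub>v v) < 0"
  proof (rule ccontr)
    assume "\<not> v \<bullet> (QD s *\<^sub>v v) < 0"
    have "(\<Sum>i<?k. ?t i) = ?t j + (\<Sum>i\<in>{..<?k} - {j}. ?t i)"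
      using j(1) by (simp add: sum.remove)
    moreover have "(\<Sum>i\<in>{..<?k} - {j}. ?t i) \<le> 0"
      using neg by (intro sum_nonpos) (simp add: of_int_plus_2_times_square_nonpos)
    moreover have "0 \<le> (\<Sum>i<?k. (v $ i - v $ (Suc i mod ?k))\<^sup>2)"
      by (intro sum_nonneg) simp
    moreover have "?t j \<le> 0" using j(2) by (simp add: of_int_plus_2_times_square_nonpos)
    ultimately have "?t j = 0" and D: "(\<Sum>i<?k. (v $ i - v $ (Suc i mod ?k))\<^sup>2) = 0"
      using QD_form[OF k v(1)] \<open>\<not> v \<bullet> (QD s *\<^sub>v v) < 0\<close> by linarith+
    then have "v $ j = 0" using j(2) by simp
    then have "v $ i = 0" if "i < ?k" for i
      using cyclic_differences_eq_0_imp_const[OF D that] cyclic_differences_eq_0_imp_const[OF D j(1)]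
      by simp
    then show False using v by (auto intro!: eq_vecI)
  qed
qed

lemma QD_not_neg_definite_if_all_minus_two:
  assumes k: "2 \<le> length s" and eq: "\<forall>i<length s. s ! i = -2"
  shows "\<not> neg_definite (QD s)"
proof -
  define one where "one = vec (length s) (\<lambda>_. 1 :: real)"
  have "0 < length s" using k by linarith
  then have "one $ 0 \<noteq> 0\<^sub>v (length s) $ 0" by (simp add: one_def)
  then have "one \<in> carrier_vec (length s)" "one \<noteq> 0\<^sub>v (length s)" by (auto simp: one_def)
  moreover have "one \<bullet> (QD s *\<^sub>v one) = 0"
  proof -
    have "one $ i = 1" if "i < length s" for i using that by (simp add: one_def)
    then have "(\<Sum>i<length s. (one $ i - one $ (Suc i mod length s))\<^sup>2) = 0"
      using \<open>0 < length s\<close> by (intro sum.neutral) simp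
    moreover have "(\<Sum>i<length s. (of_int (s ! i) + 2) * (one $ i)\<^sup>2) = 0"
      using eq by (intro sum.neutral) simp
    ultimately show ?thesis using QD_form[OF k \<open>one \<in> carrier_vec (length s)\<close>] by simp
  qed
  ultimately show ?thesis unfolding neg_definite_def using QD_carrier[of s] by auto
qed

(* The two squares are the differences across the ends of the arc, where y meets its zero
   prefix. *)
lemma QD_form_arc:
  assumes k: "2 \<le> length s" and m: "0 < m" "m < length s"
    and neg: "\<forall>i. m \<le> i \<and> i < length s \<longrightarrow> s ! i \<le> -2"
    and y: "y \<in> carrier_vec (length s)" "\<forall>i<m. y $ i = 0"
    and nonneg: "0 \<le> y \<bullet> (QD s *\<^sub>v y) + (y $ m)\<^sup>2 + (y $ (length s - 1))\<^sup>2"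
  shows "y \<bullet> (QD s *\<^sub>v y) + (y $ m)\<^sup>2 + (y $ (length s - 1))\<^sup>2 = 0
    \<and> (\<forall>i. m \<le> i \<and> i < length s \<longrightarrow> y $ i = y $ m)"
proof -
  let ?k = "length s"
  define M where "M = (\<Sum>i\<in>{m..<?k - 1}. (y $ i - y $ Suc i)\<^sup>2)"
  have "(\<Sum>i<?k. (of_int (s ! i) + 2) * (y $ i)\<^sup>2) \<le> 0"
  proof (intro sum_nonpos)
    fix i show "(of_int (s ! i) + 2) * (y $ i)\<^sup>2 \<le> 0" if "i \<in> {..<?k}"
      using that neg y(2) by (cases "i < m") (auto simp: of_int_plus_2_times_square_nonpos)
  qed
  moreover have "0 \<le> M" unfolding M_def by (intro sum_nonneg) simp
  moreover have "y \<bullet> (QD s *\<^sub>v y) + (y $ m)\<^sup>2 + (y $ (?k - 1))\<^sup>2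
      = (\<Sum>i<?k. (of_int (s ! i) + 2) * (y $ i)\<^sup>2) - M"
    using QD_form[OF k y(1)] cyclic_differences_arc[OF m, of "\<lambda>i. y $ i"] y(2) by (simp add: M_def)
  ultimately have "M = 0" and "y \<bullet> (QD s *\<^sub>v y) + (y $ m)\<^sup>2 + (y $ (?k - 1))\<^sup>2 = 0"
    using nonneg by linarith+
  moreover have "y $ i = y $ m" if "m \<le> i" "i < ?k" for i
  proof (rule eq_chain_imp_eq[of m "?k - 1" "\<lambda>i. y $ i" i])
    fix j assume "m \<le> j" "j < ?k - 1"
    then have "(y $ j - y $ Suc j)\<^sup>2 = 0"
      using sum_nonneg_0[of "{m..<?k - 1}" "\<lambda>i. (y $ i - y $ Suc i)\<^sup>2" j] \<open>M = 0\<close>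
      by (simp add: M_def)
    then show "y $ Suc j = y $ j" by simp
  qed (use that in auto)
  ultimately show ?thesis by blast
qed

lemma QD_kernel_vector:
  assumes "degenerate (QD s)"
  obtains v where "v \<in> carrier_vec (length s)" "v \<noteq> 0\<^sub>v (length s)" "QD s *\<^sub>v v = 0\<^sub>v (length s)"
  using assms det_0_iff_vec_prod_zero[OF QD_carrier[of s]] unfolding degenerate_def by blast

lemma QD_kernel_row:
  assumes k: "2 \<le> length s" and v: "v \<in> carrier_vec (length s)" and ker: "QD s *\<^sub>v v = 0\<^sub>v (length s)"
    and i: "i < length s"
  shows "of_int (s ! i) * v $ i + v $ (Suc i mod length s) + v $ ((i + length s - 1) mod length s) = 0"
  using QD_mult_vec_nth[OF k i v] ker i by simp

lemma QD_form_of_kernel_prefix_zeroed: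
  assumes v: "v \<in> carrier_vec (length s)" and ker: "QD s *\<^sub>v v = 0\<^sub>v (length s)"
    and m: "m \<le> length s"
  defines "y \<equiv> vec (length s) (\<lambda>i. if i < m then 0 else v $ i)"
  shows "y \<bullet> (QD s *\<^sub>v y) = - (\<Sum>j<m. v $ j * (QD s *\<^sub>v y) $ j)"
proof -
  let ?k = "length s"
  define w where "w = vec ?k (\<lambda>i. if i < m then v $ i else 0)"
  have w: "w \<in> carrier_vec ?k" by (simp add: w_def)
  have "y = v - w" using v by (auto simp: y_def w_def)
  then have "y \<bullet> (QD s *\<^sub>v y) = - ((QD s *\<^sub>v y) \<bullet> w)"
    using symmetric_form_of_kernel_diff[OF QD_carrier QD_symmetric v w ker] by simp
  also have "(QD s *\<^sub>v y) \<bullet> w = (\<Sum>j\<in>{0..<?k} \<inter> {..<m}. (QD s *\<^sub>v y) $ j * v $ j)"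
    using QD_carrier[of s] by (simp add: scalar_prod_def w_def sum.inter_restrict if_distrib
        cong: if_cong)
  also have "{0..<?k} \<inter> {..<m} = {..<m}" using m by auto
  finally show ?thesis by (simp add: mult.commute)
qed

lemma QD_nondegenerate_if_kernel_trivial:
  assumes "\<And>v i. v \<in> carrier_vec (length s) \<Longrightarrow> QD s *\<^sub>v v = 0\<^sub>v (length s) \<Longrightarrow> i < length s
    \<Longrightarrow> v $ i = 0"
  shows "\<not> degenerate (QD s)"
proof
  assume "degenerate (QD s)"
  then obtain v where v: "v \<in> carrier_vec (length s)" "v \<noteq> 0\<^sub>v (length s)"
    and ker: "QD s *\<^sub>v v = 0\<^sub>v (length s)"
    by (rule QD_kernel_vector)
  have "v = 0\<^sub>v (length s)" using assms[OF v(1) ker] v(1) by (intro eq_vecI) auto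
  then show False using v(2) by contradiction
qed

lemma QD_kernel_trivial_if_head_nonneg:
  assumes k: "2 \<le> length s" and head: "0 \<le> s ! 0"
    and neg: "\<forall>i. 1 \<le> i \<and> i < length s \<longrightarrow> s ! i \<le> -2"
    and v: "v \<in> carrier_vec (length s)" and ker: "QD s *\<^sub>v v = 0\<^sub>v (length s)"
    and i: "i < length s"
  shows "v $ i = 0"
proof -
  let ?k = "length s"
  have k0: "0 < ?k" "1 < ?k" using k by linarith+
  note row = QD_kernel_row[OF k v ker]
  define y where "y = vec ?k (\<lambda>i. if i < 1 then 0 else v $ i)"
  have y: "y \<in> carrier_vec ?k" "\<forall>i<1. y $ i = 0" using k0 by (auto simp: y_def)
  have "y \<bullet> (QD s *\<^sub>v y) = - (v $ 0 * (QD s *\<^sub>v y) $ 0)"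
    using QD_form_of_kernel_prefix_zeroed[OF v ker, of 1] k0 by (simp add: y_def)
  also have "(QD s *\<^sub>v y) $ 0 = v $ 1 + v $ (?k - 1)"
    using QD_mult_vec_nth[OF k k0(1) y(1)] k0 by (simp add: y_def)
  also have "v $ 1 + v $ (?k - 1) = - (of_int (s ! 0) * v $ 0)"
    using row[OF k0(1)] k0 by simp
  finally have "y \<bullet> (QD s *\<^sub>v y) = of_int (s ! 0) * (v $ 0)\<^sup>2" by (simp add: power2_eq_square)
  then have q_nonneg: "0 \<le> y \<bullet> (QD s *\<^sub>v y)" using head by simp
  then have nonneg: "0 \<le> y \<bullet> (QD s *\<^sub>v y) + (y $ 1)\<^sup>2 + (y $ (?k - 1))\<^sup>2" by simp
  have one_pos: "0 < (1 :: nat)" by simp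
  have arc: "y \<bullet> (QD s *\<^sub>v y) + (y $ 1)\<^sup>2 + (y $ (?k - 1))\<^sup>2 = 0"
    "\<And>i. 1 \<le> i \<Longrightarrow> i < ?k \<Longrightarrow> y $ i = y $ 1"
    using QD_form_arc[OF k one_pos k0(2) neg y nonneg] by blast+
  have "(y $ 1)\<^sup>2 = 0"
    using arc(1) q_nonneg zero_le_power2[of "y $ 1"] zero_le_power2[of "y $ (?k - 1)"] by linarith
  then have tail: "v $ i = 0" if "1 \<le> i" "i < ?k" for i
    using arc(2)[OF that] that k0 by (simp add: y_def)
  have "v $ (Suc 1 mod ?k) + v $ 0 = 0" using row[OF k0(2)] tail[of 1] k0 by simp
  moreover have "Suc 1 mod ?k = 0 \<or> 1 \<le> Suc 1 mod ?k" by linarith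
  ultimately have "v $ 0 = 0" using tail[of "Suc 1 mod ?k"] k0 by auto
  then show ?thesis using tail[of i] i by (cases i) auto
qed

lemma QD_kernel_trivial_if_two_zeros:
  assumes k3: "2 < length s" and zeros: "s ! 0 = 0" "s ! 1 = 0"
    and neg: "\<forall>i. 2 \<le> i \<and> i < length s \<longrightarrow> s ! i \<le> -2"
    and v: "v \<in> carrier_vec (length s)" and ker: "QD s *\<^sub>v v = 0\<^sub>v (length s)"
    and i: "i < length s"
  shows "v $ i = 0"
proof -
  let ?k = "length s"
  have k: "2 \<le> ?k" and k0: "0 < ?k" "1 < ?k" using k3 by linarith+
  note row = QD_kernel_row[OF k v ker]
  have v0: "v $ 0 = - v $ 2" and v1: "v $ 1 = - v $ (?k - 1)"
    using row[OF k0(1)] row[OF k0(2)] zeros k3 by (simp_all add: numeral_2_eq_2)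
  define y where "y = vec ?k (\<lambda>i. if i < 2 then 0 else v $ i)"
  have y: "y \<in> carrier_vec ?k" "\<forall>i<2. y $ i = 0" using k3 by (auto simp: y_def)
  have y_nth: "y $ 1 = 0" "y $ 2 = v $ 2" "y $ (?k - 1) = v $ (?k - 1)"
    using k3 by (auto simp: y_def)
  have "y \<bullet> (QD s *\<^sub>v y) = - (v $ 0 * (QD s *\<^sub>v y) $ 0 + v $ 1 * (QD s *\<^sub>v y) $ 1)"
    using QD_form_of_kernel_prefix_zeroed[OF v ker, of 2] k3 by (simp add: y_def numeral_2_eq_2)
  also have "(QD s *\<^sub>v y) $ 0 = v $ (?k - 1)"
    using QD_mult_vec_nth[OF k k0(1) y(1)] y y_nth k3 by simp
  also have "(QD s *\<^sub>v y) $ 1 = v $ 2"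
    using QD_mult_vec_nth[OF k k0(2) y(1)] y y_nth k3 by (simp add: numeral_2_eq_2)
  finally have R: "y \<bullet> (QD s *\<^sub>v y) + (y $ 2)\<^sup>2 + (y $ (?k - 1))\<^sup>2 = (v $ 2 + v $ (?k - 1))\<^sup>2"
    using y_nth v0 v1 by (simp add: power2_eq_square algebra_simps)
  then have nonneg: "0 \<le> y \<bullet> (QD s *\<^sub>v y) + (y $ 2)\<^sup>2 + (y $ (?k - 1))\<^sup>2" by simp
  have two_pos: "0 < (2 :: nat)" by simp
  have arc: "y \<bullet> (QD s *\<^sub>v y) + (y $ 2)\<^sup>2 + (y $ (?k - 1))\<^sup>2 = 0"
    "\<And>i. 2 \<le> i \<Longrightarrow> i < ?k \<Longrightarrow> y $ i = y $ 2"
    using QD_form_arc[OF k two_pos k3 neg y nonneg] by blast+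
  have "v $ 2 + v $ (?k - 1) = 0" using arc(1) R by simp
  moreover have "v $ (?k - 1) = v $ 2" using arc(2)[of "?k - 1"] y_nth k3 by simp
  ultimately have tail: "v $ i = 0" if "2 \<le> i" "i < ?k" for i
    using arc(2)[OF that] that by (simp add: y_def)
  moreover have "v $ 0 = 0" "v $ 1 = 0" using v0 v1 tail[of 2] tail[of "?k - 1"] k3 by auto
  ultimately show ?thesis using i by (metis One_nat_def less_2_cases not_less)
qed

lemma QD_nondegenerate_head_nonneg:
  assumes "2 \<le> length s" "0 \<le> s ! 0" "\<forall>i. 1 \<le> i \<and> i < length s \<longrightarrow> s ! i \<le> -2"
  shows "\<not> degenerate (QD s)"
  using QD_nondegenerate_if_kernel_trivial QD_kernel_trivial_if_head_nonneg[OF assms] by blast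

lemma QD_nondegenerate_two_zeros:
  assumes k: "2 \<le> length s" and zeros: "s ! 0 = 0" "s ! 1 = 0"
    and neg: "\<forall>i. 2 \<le> i \<and> i < length s \<longrightarrow> s ! i \<le> -2"
  shows "\<not> degenerate (QD s)"
proof (rule QD_nondegenerate_if_kernel_trivial)
  fix v i assume v: "v \<in> carrier_vec (length s)" and ker: "QD s *\<^sub>v v = 0\<^sub>v (length s)"
    and i: "i < length s"
  show "v $ i = 0"
  proof (cases "length s = 2")
    case True
    have k0: "0 < length s" "1 < length s" using k by linarith+
    have "v $ 0 = 0" "v $ 1 = 0"
      using QD_kernel_row[OF k v ker k0(1)] QD_kernel_row[OF k v ker k0(2)] zeros True by simp_all
    then show ?thesis using i True by (metis One_nat_def less_2_cases)
  next
    case False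
    then show ?thesis using QD_kernel_trivial_if_two_zeros[OF _ zeros neg v ker i] k by linarith
  qed
qed

lemma QD_b_plus_ge_1_iff:
  assumes k: "2 \<le> length s" and min: "toric_minimal s"
  shows "1 \<le> b_plus (QD s) \<longleftrightarrow> (\<exists>i<length s. 0 \<le> s ! i)"
proof
  assume "1 \<le> b_plus (QD s)"
  then obtain l where "0 < l" "eigenvalue (QD s) l"
    using b_plus_ge_1_iff[OF QD_carrier] by blast
  show "\<exists>i<length s. 0 \<le> s ! i"
  proof (rule ccontr)
    assume no_nonneg: "\<not> (\<exists>i<length s. 0 \<le> s ! i)"
    have "s ! i \<le> -2" if "i < length s" for i
    proof -
      have "s ! i \<noteq> -1" using min that unfolding toric_minimal_def by (metis nth_mem)
      moreover have "s ! i < 0" using no_nonneg that by auto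
      ultimately show ?thesis by arith
    qed
    then have "neg_semidefinite (QD s)" using QD_neg_semidefinite[OF k] by blast
    then have "l \<le> 0"
      using eigenvalue_le_0_if_neg_semidefinite[OF QD_carrier] \<open>eigenvalue (QD s) l\<close> by blast
    then show False using \<open>0 < l\<close> by simp
  qed
next
  assume "\<exists>i<length s. 0 \<le> s ! i"
  then obtain i where i: "i < length s" "0 \<le> s ! i" by blast
  define j where "j = Suc i mod length s"
  have j: "j < length s" unfolding j_def using k by (intro mod_less_divisor) linarith
  have "0 \<le> QD s $$ (i, i)" using QD_diag[OF i(1)] i(2) by simp
  moreover have "0 < QD s $$ (j, i)" unfolding j_def by (rule QD_succ_entry_pos[OF k i(1)])
  ultimately obtain x where "x \<in> carrier_vec (length s)" "0 < x \<bullet> (QD s *\<^sub>v x)"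
    using symmetric_form_pos_of_entries[OF QD_carrier QD_symmetric i(1) j] by blast
  then show "1 \<le> b_plus (QD s)"
    using symmetric_pos_form_imp_pos_eigenvalue[OF QD_carrier QD_symmetric]
      b_plus_ge_1_iff[OF QD_carrier] by blast
qed

lemma degenerate_QD_minus_one_imp:
  assumes "degenerate (QD [-1, p])"
  shows "p = -4"
proof -
  let ?s = "[-1, p] :: int list"
  obtain v where v: "v \<in> carrier_vec (length ?s)" "v \<noteq> 0\<^sub>v (length ?s)"
    and ker: "QD ?s *\<^sub>v v = 0\<^sub>v (length ?s)"
    using QD_kernel_vector[OF assms] .
  have k: "2 \<le> length ?s" by simp
  have row0: "- v $ 0 + 2 * v $ 1 = 0"
    using QD_kernel_row[OF k v(1) ker, of 0] by simp
  have row1: "of_int p * v $ 1 + 2 * v $ 0 = 0"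
    using QD_kernel_row[OF k v(1) ker, of 1] by simp
  have "v $ 1 \<noteq> 0"
  proof
    assume "v $ 1 = 0"
    moreover have "v $ 0 = 0" using row0 \<open>v $ 1 = 0\<close> by simp
    ultimately have "v = 0\<^sub>v (length ?s)"
      using v(1) by (intro eq_vecI) (auto simp: less_Suc_eq)
    then show False using v(2) by contradiction
  qed
  moreover have "(of_int p + 4) * v $ 1 = 0" using row0 row1 by (simp add: algebra_simps)
  ultimately have "of_int p + 4 = (0 :: real)" by simp
  then show ?thesis by linarith
qed

lemma toric_equiv_rotate: "2 \<le> length s \<Longrightarrow> toric_equiv s (rotate m s)"
proof (induction m)
  case 0
  then show ?case by (simp add: toric_equiv_def)
next
  case (Suc m)
  then have "toric_step (rotate m s) (rotate1 (rotate m s))" by (simp add: toric_step_def)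
  with Suc show ?case by (simp add: toric_equiv_def rotate_Suc)
qed

lemma toric_blowup_snoc_minus_one:
  assumes "2 \<le> length xs"
  obtains t where "toric_blowup t = xs @ [-1]" "length t = length xs"
proof -
  obtain a ys where "xs = a # ys" using assms by (cases xs) auto
  moreover obtain ms b where "ys = ms @ [b]" using assms \<open>xs = a # ys\<close> by (cases ys rule: rev_cases) auto
  ultimately show ?thesis
    by (intro that[of "(a + 1) # ms @ [b + 1]"]) (simp_all add: toric_blowup_def butlast_append)
qed

lemma toric_equiv_minimal_or_minus_one:
  "2 \<le> length s \<Longrightarrow> \<exists>t. toric_equiv s t \<and> (toric_minimal t \<or> (\<exists>p. t = [-1, p]))"
proof (induction "length s" arbitrary: s rule: less_induct)
  case less
  show ?case
  proof (cases "toric_minimal s")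
    case True
    then show ?thesis by (auto simp: toric_equiv_def)
  next
    case False
    then obtain j where j: "j < length s" "s ! j = -1"
      by (auto simp: toric_minimal_def in_set_conv_nth)
    have "s \<noteq> []" using less.prems by auto
    then have "hd (rotate j s) = -1" "rotate j s \<noteq> []" using hd_rotate_conv_nth[of s j] j by simp_all
    then obtain xs where xs: "rotate j s = -1 # xs" by (cases "rotate j s") auto
    have rot: "toric_equiv s (-1 # xs)" using toric_equiv_rotate[OF less.prems, of j] xs by simp
    have len: "length xs = length s - 1" using arg_cong[OF xs, of length] by simp
    show ?thesis
    proof (cases "length s = 2")
      case True
      then obtain p where "xs = [p]" using len by (cases xs) auto
      then show ?thesis using rot by blast
    next
      case False
      then have "2 \<le> length xs" using len less.prems by linarith
      then obtain t where t: "toric_blowup t = xs @ [-1]" "length t = length xs"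
        by (rule toric_blowup_snoc_minus_one)
      have "toric_step (-1 # xs) (xs @ [-1])" "toric_step (xs @ [-1]) t"
        using t \<open>2 \<le> length xs\<close> by (auto simp: toric_step_def)
      then have "toric_equiv s t"
        using rot unfolding toric_equiv_def by (meson rtranclp.rtrancl_into_rtrancl)
      moreover have "length t < length s" using t(2) len less.prems by linarith
      then obtain t' where t': "toric_equiv t t'" "toric_minimal t' \<or> (\<exists>p. t' = [-1, p])"
        using less.hyps[of t] t(2) \<open>2 \<le> length xs\<close> by auto
      ultimately have "toric_equiv s t'" unfolding toric_equiv_def by (meson rtranclp_trans)
      then show ?thesis using t'(2) by blast
    qed
  qed
qed

theorem lemma2p9:
  shows "(\<forall>s::int list. length s \<ge> 2 \<longrightarrow>
            (\<exists>t. toric_equiv s t \<and> (toric_minimal t \<or> (\<exists>p. t = [-1, p]))))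
    \<and> (\<forall>p::int. degenerate (QD [-1, p]) \<longrightarrow> p = -4)
    \<and> (\<forall>s::int list. length s \<ge> 2 \<and> toric_minimal s \<longrightarrow>
         ((b_plus (QD s) \<ge> 1 \<longleftrightarrow> (\<exists>i<length s. s ! i \<ge> 0))
          \<and> ((\<forall>i<length s. s ! i \<le> -2) \<and> (\<exists>i<length s. s ! i < -2) \<longrightarrow> neg_definite (QD s))
          \<and> ((\<forall>i<length s. s ! i = -2) \<longrightarrow> neg_semidefinite (QD s) \<and> \<not> neg_definite (QD s))
          \<and> ((s ! 0 \<ge> 0 \<and> (\<forall>i. 1 \<le> i \<and> i < length s \<longrightarrow> s ! i \<le> -2))
              \<or> (s ! 0 = 0 \<and> s ! 1 = 0 \<and> (\<forall>i. 2 \<le> i \<and> i < length s \<longrightarrow> s ! i \<le> -2))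
              \<longrightarrow> \<not> degenerate (QD s))))"
proof (intro conjI allI impI)
  fix s :: "int list"
  assume "2 \<le> length s"
  then show "\<exists>t. toric_equiv s t \<and> (toric_minimal t \<or> (\<exists>p. t = [-1, p]))"
    by (rule toric_equiv_minimal_or_minus_one)
next
  fix p :: int
  assume "degenerate (QD [-1, p])"
  then show "p = -4" by (rule degenerate_QD_minus_one_imp)
next
  fix s :: "int list"
  assume s: "2 \<le> length s \<and> toric_minimal s"
  then show "1 \<le> b_plus (QD s) \<longleftrightarrow> (\<exists>i<length s. 0 \<le> s ! i)"
    by (intro QD_b_plus_ge_1_iff) auto
  show "neg_definite (QD s)"
    if "(\<forall>i<length s. s ! i \<le> -2) \<and> (\<exists>i<length s. s ! i < -2)"
    using QD_neg_definite that s by blast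
  show "neg_semidefinite (QD s)" if "\<forall>i<length s. s ! i = -2"
    using QD_neg_semidefinite[of s] that s by simp
  show "\<not> neg_definite (QD s)" if "\<forall>i<length s. s ! i = -2"
    using QD_not_neg_definite_if_all_minus_two that s by blast
  show "\<not> degenerate (QD s)"
    if "(0 \<le> s ! 0 \<and> (\<forall>i. 1 \<le> i \<and> i < length s \<longrightarrow> s ! i \<le> -2))
      \<or> (s ! 0 = 0 \<and> s ! 1 = 0 \<and> (\<forall>i. 2 \<le> i \<and> i < length s \<longrightarrow> s ! i \<le> -2))"
    using that s QD_nondegenerate_head_nonneg QD_nondegenerate_two_zeros by blast
qed

end
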